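(* Let $(X,\tau)$ be an extended locally convex space and let $\tau_F$ be its finest locally convex topology. Then $(X,\tau)$ is Hausdorff if and only if $(X,\tau_F)$ is Hausdorff.
   Context: An extended seminorm on a vector space $X$ over $\mathbb{R}$ or $\mathbb{C}$ is a map $\rho:X\to[0,\infty]$ with $\rho(\alpha x)=|\alpha|\rho(x)$ and $\rho(x+y)\le\rho(x)+\rho(y)$. An extended locally convex space $(X,\tau)$ is a vector space with the topology induced by a family $\{\rho_i\}$ of extended seminorms (neighborhood base at $x_0$: $\{x:\max_{i\in J}\rho_i(x-x_0)<\varepsilon\}$, $J$ finite, $\varepsilon>0$). A locally convex topology is one induced in this way by finite-valued seminorms. The finest locally convex topology $\tau_F$ of $(X,\tau)$ is the locally convex topology on $X$ with $\tau_F\subseteq\tau$ such that every locally convex topology $\sigma\subseteq\tau$ on $X$ satisfies $\sigma\subseteq\tau_F$. *)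

theory Defs
  imports "HOL-Analysis.Analysis"
begin

text \<open>Extended seminorms on a vector space whose scalar multiplication is sc
  (sc = scaleR for real, sc = scaleC for complex vector spaces).  Values in [0,\<infinity>]
  are modelled by ennreal.\<close>
definition ext_seminorm :: "('k::real_normed_field \<Rightarrow> 'a::ab_group_add \<Rightarrow> 'a) \<Rightarrow> ('a \<Rightarrow> ennreal) \<Rightarrow> bool" where
  "ext_seminorm sc \<rho> \<longleftrightarrow>
     (\<forall>c x. \<rho> (sc c x) = ennreal (norm c) * \<rho> x) \<and>
     (\<forall>x y. \<rho> (x + y) \<le> \<rho> x + \<rho> y)"

definition fin_seminorm :: "('k::real_normed_field \<Rightarrow> 'a::ab_group_add \<Rightarrow> 'a) \<Rightarrow> ('a \<Rightarrow> ennreal) \<Rightarrow> bool" where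
  "fin_seminorm sc \<rho> \<longleftrightarrow> ext_seminorm sc \<rho> \<and> (\<forall>x. \<rho> x < \<infinity>)"

definition seminorm_topology :: "('a::ab_group_add \<Rightarrow> ennreal) set \<Rightarrow> 'a topology" where
  "seminorm_topology P = topology (\<lambda>U. \<forall>x0\<in>U. \<exists>J \<epsilon>. finite J \<and> J \<subseteq> P \<and> (\<epsilon>::real) > 0 \<and>
       {x. \<forall>\<rho>\<in>J. \<rho> (x - x0) < ennreal \<epsilon>} \<subseteq> U)"

definition ext_lc_topology :: "('k::real_normed_field \<Rightarrow> 'a::ab_group_add \<Rightarrow> 'a) \<Rightarrow> 'a topology \<Rightarrow> bool" where
  "ext_lc_topology sc T \<longleftrightarrow> (\<exists>P. (\<forall>\<rho>\<in>P. ext_seminorm sc \<rho>) \<and> T = seminorm_topology P)"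

definition lc_topology :: "('k::real_normed_field \<Rightarrow> 'a::ab_group_add \<Rightarrow> 'a) \<Rightarrow> 'a topology \<Rightarrow> bool" where
  "lc_topology sc T \<longleftrightarrow> (\<exists>P. (\<forall>\<rho>\<in>P. fin_seminorm sc \<rho>) \<and> T = seminorm_topology P)"

definition coarser :: "'a topology \<Rightarrow> 'a topology \<Rightarrow> bool" where
  "coarser \<sigma> \<tau> \<longleftrightarrow> (\<forall>U. openin \<sigma> U \<longrightarrow> openin \<tau> U)"

definition finest_lc_topology :: "('k::real_normed_field \<Rightarrow> 'a::ab_group_add \<Rightarrow> 'a) \<Rightarrow> 'a topology \<Rightarrow> 'a topology \<Rightarrow> bool" where
  "finest_lc_topology sc \<tau> \<tau>F \<longleftrightarrow> lc_topology sc \<tau>F \<and> coarser \<tau>F \<tau> \<and>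
     (\<forall>\<sigma>. lc_topology sc \<sigma> \<and> coarser \<sigma> \<tau> \<longrightarrow> coarser \<sigma> \<tau>F)"

end

theory Submission
  imports Defs
begin

text \<open>If \<tau> is Hausdorff, its seminorms separate points. An extended seminorm \<rho> with
  \<rho> d > 0 dominates a finite seminorm q with q d > 0: take \<rho> \<circ> \<pi> for a linear
  projection \<pi> onto the subspace where \<rho> is finite, and add |g (x - \<pi> x)| for a linear
  functional g with g (d - \<pi> d) = 1 whenever d - \<pi> d \<noteq> 0. All such q generate a
  Hausdorff locally convex topology coarser than \<tau>, hence coarser than \<tau>F, so \<tau>F is
  Hausdorff; the converse holds because \<tau>F is coarser than \<tau>.\<close>

lemma ext_seminorm_zero:
  fixes sc :: "'k::real_normed_field \<Rightarrow> 'a::ab_group_add \<Rightarrow> 'a"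
  assumes "vector_space sc" and "ext_seminorm sc \<rho>"
  shows "\<rho> 0 = 0"
proof -
  interpret vector_space sc by fact
  have "\<rho> (sc 0 0) = ennreal (norm (0::'k)) * \<rho> 0"
    using \<open>ext_seminorm sc \<rho>\<close> unfolding ext_seminorm_def by blast
  then show ?thesis by simp
qed

lemma ext_seminorm_minus:
  fixes sc :: "'k::real_normed_field \<Rightarrow> 'a::ab_group_add \<Rightarrow> 'a"
  assumes "vector_space sc" and "ext_seminorm sc \<rho>"
  shows "\<rho> (- x) = \<rho> x"
proof -
  interpret vector_space sc by fact
  have "\<rho> (sc (-1) x) = ennreal (norm (-1::'k)) * \<rho> x"
    using \<open>ext_seminorm sc \<rho>\<close> unfolding ext_seminorm_def by blast
  then show ?thesis by (simp add: scale_minus_left)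
qed

lemma openin_seminorm_topology:
  "openin (seminorm_topology P) U \<longleftrightarrow>
     (\<forall>x0\<in>U. \<exists>J \<epsilon>. finite J \<and> J \<subseteq> P \<and> (\<epsilon>::real) > 0 \<and>
        {x. \<forall>\<rho>\<in>J. \<rho> (x - x0) < ennreal \<epsilon>} \<subseteq> U)"
proof -
  define nbhd_open where "nbhd_open U \<longleftrightarrow> (\<forall>x0\<in>U. \<exists>J \<epsilon>. finite J \<and> J \<subseteq> P \<and> (\<epsilon>::real) > 0 \<and>
        {x. \<forall>\<rho>\<in>J. \<rho> (x - x0) < ennreal \<epsilon>} \<subseteq> U)" for U
  have "istopology nbhd_open"
    unfolding istopology_def
  proof (intro conjI allI impI)
    fix S T assume "nbhd_open S" "nbhd_open T"
    show "nbhd_open (S \<inter> T)"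
      unfolding nbhd_open_def
    proof
      fix x0 assume "x0 \<in> S \<inter> T"
      then obtain J1 \<epsilon>1 J2 \<epsilon>2 where J:
        "finite J1" "J1 \<subseteq> P" "\<epsilon>1 > 0" "{x. \<forall>\<rho>\<in>J1. \<rho> (x - x0) < ennreal \<epsilon>1} \<subseteq> S"
        "finite J2" "J2 \<subseteq> P" "\<epsilon>2 > 0" "{x. \<forall>\<rho>\<in>J2. \<rho> (x - x0) < ennreal \<epsilon>2} \<subseteq> T"
        using \<open>nbhd_open S\<close> \<open>nbhd_open T\<close> unfolding nbhd_open_def by (meson IntD1 IntD2)
      have sub: "{x. \<forall>\<rho>\<in>J1 \<union> J2. \<rho> (x - x0) < ennreal (min \<epsilon>1 \<epsilon>2)} \<subseteq>
          {x. \<forall>\<rho>\<in>J1. \<rho> (x - x0) < ennreal \<epsilon>1} \<inter> {x. \<forall>\<rho>\<in>J2. \<rho> (x - x0) < ennreal \<epsilon>2}"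
      proof -
        have "a < ennreal \<epsilon>1 \<and> a < ennreal \<epsilon>2" if "a < ennreal (min \<epsilon>1 \<epsilon>2)" for a
          using that by (meson ennreal_leI min.cobounded1 min.cobounded2 order_less_le_trans)
        then show ?thesis by blast
      qed
      then show "\<exists>J \<epsilon>. finite J \<and> J \<subseteq> P \<and> (\<epsilon>::real) > 0 \<and>
          {x. \<forall>\<rho>\<in>J. \<rho> (x - x0) < ennreal \<epsilon>} \<subseteq> S \<inter> T"
        using J by (intro exI[of _ "J1 \<union> J2"] exI[of _ "min \<epsilon>1 \<epsilon>2"] conjI) auto
    qed
  next
    fix K assume "\<forall>S\<in>K. nbhd_open S"
    then show "nbhd_open (\<Union>K)"
      unfolding nbhd_open_def by (meson Union_iff Union_upper subset_trans)
  qed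
  then show ?thesis
    by (simp add: seminorm_topology_def nbhd_open_def[abs_def])
qed

lemma topspace_seminorm_topology [simp]: "topspace (seminorm_topology P) = UNIV"
proof -
  have "openin (seminorm_topology P) UNIV"
    unfolding openin_seminorm_topology by (intro ballI exI[of _ "{}"] exI[of _ "1::real"]) simp
  then show ?thesis
    by (simp add: openin_subset top.extremum_uniqueI)
qed

lemma openin_seminorm_topology_ball:
  assumes "\<rho> \<in> P" and triangle: "\<And>x y. \<rho> (x + y) \<le> \<rho> x + \<rho> y"
  shows "openin (seminorm_topology P) {x. \<rho> (x - c) < ennreal r}"
  unfolding openin_seminorm_topology
proof
  fix x0 assume "x0 \<in> {x. \<rho> (x - c) < ennreal r}"
  then have "\<rho> (x0 - c) < ennreal r" by simp
  then obtain t where t: "\<rho> (x0 - c) = ennreal t" "0 \<le> t" "t < r"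
    by (cases "\<rho> (x0 - c)" rule: ennreal_cases) (auto simp: ennreal_less_iff)
  have "{x. \<rho> (x - x0) < ennreal (r - t)} \<subseteq> {x. \<rho> (x - c) < ennreal r}"
  proof safe
    fix x assume "\<rho> (x - x0) < ennreal (r - t)"
    have "\<rho> (x - c) \<le> \<rho> (x0 - c) + \<rho> (x - x0)"
      using triangle[of "x0 - c" "x - x0"] by (simp add: algebra_simps)
    also have "\<dots> < ennreal t + ennreal (r - t)"
      using \<open>\<rho> (x - x0) < ennreal (r - t)\<close> t(1) by (simp add: ennreal_add_left_cancel_less)
    also have "\<dots> = ennreal r"
      using t by (simp flip: ennreal_plus)
    finally show "\<rho> (x - c) < ennreal r" .
  qed
  then show "\<exists>J \<epsilon>. finite J \<and> J \<subseteq> P \<and> (\<epsilon>::real) > 0 \<and>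
      {x. \<forall>\<rho>\<in>J. \<rho> (x - x0) < ennreal \<epsilon>} \<subseteq> {x. \<rho> (x - c) < ennreal r}"
    using \<open>\<rho> \<in> P\<close> \<open>t < r\<close> by (intro exI[of _ "{\<rho>}"] exI[of _ "r - t"]) auto
qed

lemma Hausdorff_space_seminorm_topology_iff:
  fixes sc :: "'k::real_normed_field \<Rightarrow> 'a::ab_group_add \<Rightarrow> 'a"
  assumes "vector_space sc" and seminorms: "\<forall>\<rho>\<in>P. ext_seminorm sc \<rho>"
  shows "Hausdorff_space (seminorm_topology P) \<longleftrightarrow> (\<forall>d. d \<noteq> 0 \<longrightarrow> (\<exists>\<rho>\<in>P. 0 < \<rho> d))"
proof (intro iffI allI impI)
  fix d :: 'a assume "Hausdorff_space (seminorm_topology P)" and "d \<noteq> 0"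
  then obtain U V where U: "openin (seminorm_topology P) U" "0 \<in> U" and "d \<in> V" "disjnt U V"
    unfolding Hausdorff_space_def by (metis UNIV_I topspace_seminorm_topology)
  then have "d \<notin> U" by (meson disjnt_iff)
  obtain J \<epsilon> where J: "J \<subseteq> P" "(\<epsilon>::real) > 0" "{x. \<forall>\<rho>\<in>J. \<rho> (x - 0) < ennreal \<epsilon>} \<subseteq> U"
    using U unfolding openin_seminorm_topology by meson
  then have "d \<notin> {x. \<forall>\<rho>\<in>J. \<rho> (x - 0) < ennreal \<epsilon>}"
    using \<open>d \<notin> U\<close> by (meson subsetD)
  then obtain \<rho> where "\<rho> \<in> J" "ennreal \<epsilon> \<le> \<rho> d"
    by (auto simp: not_less)
  then show "\<exists>\<rho>\<in>P. 0 < \<rho> d"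
    using J(1,2) by (meson ennreal_less_zero_iff order_less_le_trans subsetD)
next
  assume separating: "\<forall>d. d \<noteq> 0 \<longrightarrow> (\<exists>\<rho>\<in>P. 0 < \<rho> d)"
  show "Hausdorff_space (seminorm_topology P)"
    unfolding Hausdorff_space_def
  proof clarify
    fix x y :: 'a assume "x \<noteq> y"
    then obtain \<rho> where "\<rho> \<in> P" and pos: "0 < \<rho> (y - x)"
      using separating by (metis eq_iff_diff_eq_0)
    then have \<rho>: "ext_seminorm sc \<rho>" using seminorms by blast
    have triangle: "\<rho> (u + v) \<le> \<rho> u + \<rho> v" for u v
      using \<rho> unfolding ext_seminorm_def by blast
    obtain r :: rat where "0 < r" and "ennreal (of_rat r) < \<rho> (y - x)"
      using ennreal_rat_dense[OF pos] by (auto simp: ennreal_less_iff)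
    define U where "U = {z. \<rho> (z - x) < ennreal (of_rat r / 2)}"
    define V where "V = {z. \<rho> (z - y) < ennreal (of_rat r / 2)}"
    have "disjnt U V"
      unfolding disjnt_iff U_def V_def mem_Collect_eq
    proof (intro allI notI, elim conjE)
      fix z assume "\<rho> (z - x) < ennreal (of_rat r / 2)" "\<rho> (z - y) < ennreal (of_rat r / 2)"
      then have "\<rho> (z - x) + \<rho> (- (z - y)) < ennreal (of_rat r / 2 + of_rat r / 2)"
        unfolding ext_seminorm_minus[OF \<open>vector_space sc\<close> \<rho>] by (rule add_mono_ennreal)
      moreover have "\<rho> (y - x) \<le> \<rho> (z - x) + \<rho> (- (z - y))"
        using triangle[of "z - x" "- (z - y)"] by simp
      ultimately show False
        using \<open>ennreal (of_rat r) < \<rho> (y - x)\<close> by simp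
    qed
    moreover have "x \<in> U" "y \<in> V"
      using \<open>0 < r\<close> ext_seminorm_zero[OF \<open>vector_space sc\<close> \<rho>] by (simp_all add: U_def V_def)
    moreover have "openin (seminorm_topology P) U" "openin (seminorm_topology P) V"
      unfolding U_def V_def using \<open>\<rho> \<in> P\<close> triangle by (simp_all add: openin_seminorm_topology_ball)
    ultimately show "\<exists>U V. openin (seminorm_topology P) U \<and> openin (seminorm_topology P) V \<and>
        x \<in> U \<and> y \<in> V \<and> disjnt U V"
      by blast
  qed
qed

lemma coarser_seminorm_topology_dominated:
  assumes "\<And>q. q \<in> Q \<Longrightarrow> \<exists>\<rho>\<in>P. \<forall>x. q x \<le> \<rho> x"
  shows "coarser (seminorm_topology Q) (seminorm_topology P)"
  unfolding coarser_def openin_seminorm_topology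
proof (intro allI impI ballI)
  have "\<forall>q\<in>Q. \<exists>\<rho>. \<rho> \<in> P \<and> (\<forall>x. q x \<le> \<rho> x)"
    using assms by blast
  then obtain f where f: "\<forall>q\<in>Q. f q \<in> P \<and> (\<forall>x. q x \<le> f q x)"
    by (rule bchoice[THEN exE])
  fix U x0
  assume "\<forall>x0\<in>U. \<exists>J \<epsilon>. finite J \<and> J \<subseteq> Q \<and> (\<epsilon>::real) > 0 \<and>
      {x. \<forall>\<rho>\<in>J. \<rho> (x - x0) < ennreal \<epsilon>} \<subseteq> U" and "x0 \<in> U"
  then obtain J \<epsilon> where J: "finite J" "J \<subseteq> Q" "(\<epsilon>::real) > 0"
    "{x. \<forall>\<rho>\<in>J. \<rho> (x - x0) < ennreal \<epsilon>} \<subseteq> U"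
    by meson
  have "f ` J \<subseteq> P"
    using f J(2) by blast
  moreover have "{x. \<forall>\<rho>\<in>f ` J. \<rho> (x - x0) < ennreal \<epsilon>} \<subseteq> U"
  proof
    fix x assume x: "x \<in> {x. \<forall>\<rho>\<in>f ` J. \<rho> (x - x0) < ennreal \<epsilon>}"
    have "q (x - x0) < ennreal \<epsilon>" if "q \<in> J" for q
    proof -
      have "q (x - x0) \<le> f q (x - x0)"
        using f J(2) that by blast
      also have "\<dots> < ennreal \<epsilon>"
        using x that by simp
      finally show ?thesis .
    qed
    then show "x \<in> U"
      using J(4) by blast
  qed
  ultimately show "\<exists>J \<epsilon>. finite J \<and> J \<subseteq> P \<and> (\<epsilon>::real) > 0 \<and>
      {x. \<forall>\<rho>\<in>J. \<rho> (x - x0) < ennreal \<epsilon>} \<subseteq> U"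
    using J(1,3) by (intro exI[of _ "f ` J"] exI[of _ \<epsilon>] conjI finite_imageI)
qed

lemma fin_seminorm_add:
  assumes "fin_seminorm sc p" and "fin_seminorm sc q"
  shows "fin_seminorm sc (\<lambda>x. p x + q x)"
proof -
  have "p (x + y) + q (x + y) \<le> (p x + q x) + (p y + q y)" for x y
  proof -
    have "p (x + y) + q (x + y) \<le> (p x + p y) + (q x + q y)"
      using assms unfolding fin_seminorm_def ext_seminorm_def by (blast intro: add_mono)
    then show ?thesis by (simp add: ac_simps)
  qed
  then show ?thesis
    using assms unfolding fin_seminorm_def ext_seminorm_def
    by (simp add: distrib_left ennreal_add_less_top)
qed

lemma ext_seminorm_norm: "ext_seminorm (*) (\<lambda>c::'k::real_normed_field. ennreal (norm c))"
  unfolding ext_seminorm_def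
  by (simp add: norm_mult ennreal_mult' norm_triangle_ineq ennreal_leI flip: ennreal_plus)

lemma fin_seminorm_compose_linear:
  fixes sc1 :: "'k::real_normed_field \<Rightarrow> 'a::ab_group_add \<Rightarrow> 'a"
    and sc2 :: "'k \<Rightarrow> 'b::ab_group_add \<Rightarrow> 'b"
  assumes "Vector_Spaces.linear sc1 sc2 f" and "ext_seminorm sc2 \<rho>" and "\<And>x. \<rho> (f x) < \<infinity>"
  shows "fin_seminorm sc1 (\<lambda>x. \<rho> (f x))"
proof -
  interpret f: Vector_Spaces.linear sc1 sc2 f by fact
  show ?thesis
    using assms(2,3) unfolding fin_seminorm_def ext_seminorm_def by (simp add: f.scale f.add)
qed

lemma subspace_ext_seminorm_finite:
  fixes sc :: "'k::real_normed_field \<Rightarrow> 'a::ab_group_add \<Rightarrow> 'a"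
  assumes "vector_space sc" and "ext_seminorm sc \<rho>"
  shows "module.subspace sc {x. \<rho> x < \<infinity>}"
proof -
  interpret vector_space sc by fact
  have "\<rho> (x + y) < \<infinity>" if "\<rho> x < \<infinity>" "\<rho> y < \<infinity>" for x y
  proof -
    have "\<rho> (x + y) \<le> \<rho> x + \<rho> y"
      using \<open>ext_seminorm sc \<rho>\<close> unfolding ext_seminorm_def by blast
    also have "\<dots> < \<infinity>"
      using that by (simp add: ennreal_add_less_top)
    finally show ?thesis .
  qed
  moreover have "\<rho> (sc c x) < \<infinity>" if "\<rho> x < \<infinity>" for c x
    using that \<open>ext_seminorm sc \<rho>\<close> unfolding ext_seminorm_def by (simp add: ennreal_mult_less_top)
  ultimately show ?thesis
    using ext_seminorm_zero[OF assms] by (simp add: subspace_def)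
qed

lemma ext_seminorm_dominates_fin_seminorm:
  fixes sc :: "'k::real_normed_field \<Rightarrow> 'a::ab_group_add \<Rightarrow> 'a"
  assumes "vector_space sc" and \<rho>: "ext_seminorm sc \<rho>" and "0 < \<rho> d"
  obtains q where "fin_seminorm sc q" "\<And>x. q x \<le> \<rho> x" "0 < q d"
proof -
  interpret V: vector_space sc by fact
  interpret VV: vector_space_pair sc sc by unfold_locales
  interpret VK: vector_space_pair sc "(*) :: 'k \<Rightarrow> 'k \<Rightarrow> 'k" by unfold_locales
  define M where "M = {x. \<rho> x < \<infinity>}"
  obtain \<pi> where "range \<pi> \<subseteq> M" and lin_\<pi>: "Vector_Spaces.linear sc sc \<pi>"
    and \<pi>_id: "\<And>x. x \<in> M \<Longrightarrow> \<pi> x = x"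
    using VV.linear_exists_left_inverse_on[OF V.linear_id
        subspace_ext_seminorm_finite[OF \<open>vector_space sc\<close> \<rho>, folded M_def]]
    by auto
  then have \<pi>_finite: "\<rho> (\<pi> x) < \<infinity>" for x
    by (auto simp: M_def)
  define e where "e = d - \<pi> d"
  have "V.independent ({e} - {0})"
    by (cases "e = 0") (auto simp: V.independent_insert V.independent_empty)
  then obtain g where lin_g: "Vector_Spaces.linear sc (*) g" and "e \<noteq> 0 \<Longrightarrow> g e = 1"
    using VK.linear_independent_extend[of "{e} - {0}" "\<lambda>_. 1"] by auto
  interpret g: Vector_Spaces.linear sc "(*)" g by (fact lin_g)
  have lin_rest: "Vector_Spaces.linear sc (*) (\<lambda>x. g (x - \<pi> x))"
    using Vector_Spaces.linear_compose[OF VV.linear_compose_sub[OF V.linear_id lin_\<pi>] lin_g]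
    by (simp add: comp_def)
  define q where "q x = \<rho> (\<pi> x) + ennreal (norm (g (x - \<pi> x)))" for x
  show thesis
  proof
    show "fin_seminorm sc q"
      unfolding q_def
      by (intro fin_seminorm_add fin_seminorm_compose_linear[OF lin_\<pi> \<rho> \<pi>_finite]
          fin_seminorm_compose_linear[OF lin_rest ext_seminorm_norm]) simp
  next
    fix x show "q x \<le> \<rho> x"
      by (cases "x \<in> M") (simp_all add: q_def \<pi>_id M_def not_less top_unique)
  next
    show "0 < q d"
    proof (cases "d \<in> M")
      case True
      then show ?thesis
        using \<open>0 < \<rho> d\<close> by (simp add: q_def \<pi>_id add_pos_nonneg)
    next
      case False
      then have "e \<noteq> 0"
        using \<open>range \<pi> \<subseteq> M\<close> by (auto simp: e_def)
      then show ?thesis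
        using \<open>e \<noteq> 0 \<Longrightarrow> g e = 1\<close> by (simp add: q_def e_def[symmetric] add_nonneg_pos)
    qed
  qed
qed

lemma Hausdorff_space_finest_lc_topology_iff:
  fixes sc :: "'k::real_normed_field \<Rightarrow> 'a::ab_group_add \<Rightarrow> 'a"
  assumes vs: "vector_space sc" and "ext_lc_topology sc T" and finest: "finest_lc_topology sc T TF"
  shows "Hausdorff_space T \<longleftrightarrow> Hausdorff_space TF"
proof -
  obtain P where P: "\<forall>\<rho>\<in>P. ext_seminorm sc \<rho>" and T: "T = seminorm_topology P"
    using \<open>ext_lc_topology sc T\<close> unfolding ext_lc_topology_def by auto
  obtain P' where TF: "TF = seminorm_topology P'"
    using finest unfolding finest_lc_topology_def lc_topology_def by auto
  define Q where "Q = {q. fin_seminorm sc q \<and> (\<exists>\<rho>\<in>P. \<forall>x. q x \<le> \<rho> x)}"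
  have "lc_topology sc (seminorm_topology Q)"
    unfolding lc_topology_def by (intro exI[of _ Q]) (simp add: Q_def)
  moreover have "coarser (seminorm_topology Q) T"
    unfolding T Q_def by (rule coarser_seminorm_topology_dominated) blast
  ultimately have Q_TF: "coarser (seminorm_topology Q) TF"
    using finest unfolding finest_lc_topology_def by blast
  have Q_Hausdorff: "Hausdorff_space (seminorm_topology Q)" if "Hausdorff_space T"
  proof -
    have "\<exists>q\<in>Q. 0 < q d" if "d \<noteq> 0" for d
    proof -
      obtain \<rho> where "\<rho> \<in> P" "0 < \<rho> d"
        using \<open>Hausdorff_space T\<close> \<open>d \<noteq> 0\<close>
        unfolding T Hausdorff_space_seminorm_topology_iff[OF vs P] by blast
      moreover obtain q where "fin_seminorm sc q" "\<And>x. q x \<le> \<rho> x" "0 < q d"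
        using ext_seminorm_dominates_fin_seminorm[OF vs bspec[OF P \<open>\<rho> \<in> P\<close>] \<open>0 < \<rho> d\<close>] by blast
      ultimately show ?thesis
        unfolding Q_def by blast
    qed
    moreover have "\<forall>q\<in>Q. ext_seminorm sc q"
      by (simp add: Q_def fin_seminorm_def)
    ultimately show ?thesis
      by (simp add: Hausdorff_space_seminorm_topology_iff[OF vs])
  qed
  have "coarser TF T"
    using finest unfolding finest_lc_topology_def by blast
  show ?thesis
  proof
    assume "Hausdorff_space T"
    then have "Hausdorff_space (seminorm_topology Q)"
      by (rule Q_Hausdorff)
    then show "Hausdorff_space TF"
      by (rule Hausdorff_space_expansive) (use Q_TF in \<open>simp_all add: TF coarser_def\<close>)
  next
    assume "Hausdorff_space TF"
    then show "Hausdorff_space T"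
      by (rule Hausdorff_space_expansive) (use \<open>coarser TF T\<close> in \<open>simp_all add: T TF coarser_def\<close>)
  qed
qed

theorem proposition3p9:
  fixes \<tau> \<tau>F :: "'a::real_vector topology"
    and sc :: "complex \<Rightarrow> 'b::ab_group_add \<Rightarrow> 'b"
    and \<upsilon> \<upsilon>F :: "'b topology"
  assumes "ext_lc_topology scaleR \<tau>" and "finest_lc_topology scaleR \<tau> \<tau>F"
    and "vector_space sc"
    and "ext_lc_topology sc \<upsilon>" and "finest_lc_topology sc \<upsilon> \<upsilon>F"
  shows "(Hausdorff_space \<tau> \<longleftrightarrow> Hausdorff_space \<tau>F) \<and>
         (Hausdorff_space \<upsilon> \<longleftrightarrow> Hausdorff_space \<upsilon>F)"
  using Hausdorff_space_finest_lc_topology_iff[OF real_vector.vector_space_axioms assms(1,2)]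
    Hausdorff_space_finest_lc_topology_iff[OF assms(3-5)]
  by blast

end
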